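(* For all $n\ge1$: $T_{nn}=U_{n,n+1}=-1$, $T_{n0}=(-1)^{n+1}4n$, $U_{n0}=(-1)^{n+1}4(2n-1)$. Moreover $T_{nj}\ne0$ only when $0\le j\le n$, and $U_{nj}\ne0$ only when $0\le j\le n+1$.
   Context: The numbers $T_{nj},U_{nj}$ (integers $n\ge0$, $j$) are defined by: $T_{nj}=U_{nj}=0$ whenever $j<0$; $T_{0j}=0$ for all $j\ge1$, $U_{01}=-1$, $U_{0j}=0$ for all $j\ge2$; $T_{10}=4$, $U_{10}=4$; and for all $n\ge1$, $j\ge0$ with $(n,j)\ne(1,0)$: $T_{nj}=-3T_{n-1,j}+U_{n-1,j}$ and $U_{nj}=-4T_{n-1,j}+U_{n-1,j}+T_{n,j-1}$. *)

theory Defs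
  imports Main
begin

end

theory Submission
  imports Defs
begin

text \<open>Everything follows by induction on \<open>n\<close> from two consequences of the recurrence:
  row \<open>n + 1\<close> of \<open>T\<close> is supported where row \<open>n\<close> of \<open>T\<close> and \<open>U\<close> are, and \<open>U\<close> adds one more
  entry through the shifted term \<open>T (n+1) (j-1)\<close>. At the top of the support only one term
  survives in each recurrence, so the extreme entries are all copies of \<open>U 0 1 = -1\<close>; at
  \<open>j = 0\<close> the shifted term vanishes and the recurrence becomes a linear 2\<times>2 system whose
  solution is the stated alternating closed form.\<close>

locale TU_recurrence =
  fixes T U :: "nat \<Rightarrow> int \<Rightarrow> int"
  assumes neg: "\<And>n j. j < 0 \<Longrightarrow> T n j = 0 \<and> U n j = 0"
    and T0: "\<And>j. j \<ge> 1 \<Longrightarrow> T 0 j = 0"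
    and U01: "U 0 1 = -1"
    and U0: "\<And>j. j \<ge> 2 \<Longrightarrow> U 0 j = 0"
    and T10: "T 1 0 = 4"
    and U10: "U 1 0 = 4"
    and recT: "\<And>n j. n \<ge> 1 \<Longrightarrow> j \<ge> 0 \<Longrightarrow> (n, j) \<noteq> (1, 0) \<Longrightarrow>
                 T n j = -3 * T (n - 1) j + U (n - 1) j"
    and recU: "\<And>n j. n \<ge> 1 \<Longrightarrow> j \<ge> 0 \<Longrightarrow> (n, j) \<noteq> (1, 0) \<Longrightarrow>
                 U n j = -4 * T (n - 1) j + U (n - 1) j + T n (j - 1)"
begin

lemma T_Suc:
  assumes "j \<ge> 0" "(n, j) \<noteq> (0, 0)"
  shows "T (Suc n) j = -3 * T n j + U n j"
  using recT[of "Suc n" j] assms by simp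

lemma U_Suc:
  assumes "j \<ge> 0" "(n, j) \<noteq> (0, 0)"
  shows "U (Suc n) j = -4 * T n j + U n j + T (Suc n) (j - 1)"
  using recU[of "Suc n" j] assms by simp

lemma vanishes_above: "(int n < j \<longrightarrow> T n j = 0) \<and> (int n + 1 < j \<longrightarrow> U n j = 0)"
proof (induction n arbitrary: j)
  case 0
  show ?case using T0 U0 by simp
next
  case (Suc n)
  have T_Suc_zero: "T (Suc n) i = 0" if "int n + 1 < i" for i
    using that T_Suc[of i n] Suc.IH[of i] by simp
  have "U (Suc n) j = 0" if "int n + 2 < j"
    using that U_Suc[of j n] Suc.IH[of j] T_Suc_zero[of "j - 1"] by simp
  then show ?case using T_Suc_zero by simp
qed

lemma T_vanishes_above: "int n < j \<Longrightarrow> T n j = 0"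
  using vanishes_above by blast

lemma U_vanishes_above: "int n + 1 < j \<Longrightarrow> U n j = 0"
  using vanishes_above by blast

lemma T_Suc_diagonal: "T (Suc n) (int n + 1) = U n (int n + 1)"
  using T_Suc[of "int n + 1" n] T_vanishes_above[of n "int n + 1"] by simp

lemma U_superdiagonal: "U n (int n + 1) = -1"
proof (induction n)
  case 0
  show ?case using U01 by simp
next
  case (Suc n)
  have "U (Suc n) (int n + 2) = T (Suc n) (int n + 1)"
    using U_Suc[of "int n + 2" n] T_vanishes_above[of n "int n + 2"]
      U_vanishes_above[of n "int n + 2"] by (simp add: add.commute)
  moreover have "int (Suc n) + 1 = int n + 2" by simp
  ultimately show ?case using T_Suc_diagonal Suc.IH by metis
qed

lemma T_diagonal: "n \<ge> 1 \<Longrightarrow> T n (int n) = -1"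
  using T_Suc_diagonal[of "n - 1"] U_superdiagonal[of "n - 1"] by (cases n) (simp_all add: add.commute)

lemma column_zero:
  assumes "n \<ge> 1"
  shows "T n 0 = (-1) ^ (n + 1) * 4 * int n \<and> U n 0 = (-1) ^ (n + 1) * 4 * (2 * int n - 1)"
  using assms
proof (induction n rule: dec_induct)
  case base
  show ?case using T10 U10 by simp
next
  case (step n)
  have "T (Suc n) 0 = -3 * T n 0 + U n 0"
    using T_Suc[of 0 n] step.hyps by simp
  moreover have "U (Suc n) 0 = -4 * T n 0 + U n 0"
    using U_Suc[of 0 n] step.hyps neg[of "-1" "Suc n"] by simp
  ultimately show ?case using step.IH by (simp add: algebra_simps)
qed

end

theorem lemma8p2:
  fixes T U :: "nat \<Rightarrow> int \<Rightarrow> int"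
  assumes neg: "\<And>n j. j < 0 \<Longrightarrow> T n j = 0 \<and> U n j = 0"
    and T0: "\<And>j. j \<ge> 1 \<Longrightarrow> T 0 j = 0"
    and U01: "U 0 1 = -1"
    and U0: "\<And>j. j \<ge> 2 \<Longrightarrow> U 0 j = 0"
    and T10: "T 1 0 = 4"
    and U10: "U 1 0 = 4"
    and recT: "\<And>n j. n \<ge> 1 \<Longrightarrow> j \<ge> 0 \<Longrightarrow> (n, j) \<noteq> (1, 0) \<Longrightarrow>
                 T n j = -3 * T (n - 1) j + U (n - 1) j"
    and recU: "\<And>n j. n \<ge> 1 \<Longrightarrow> j \<ge> 0 \<Longrightarrow> (n, j) \<noteq> (1, 0) \<Longrightarrow>
                 U n j = -4 * T (n - 1) j + U (n - 1) j + T n (j - 1)"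
  shows "\<forall>n\<ge>1.
           T n (int n) = -1 \<and> U n (int n + 1) = -1 \<and>
           T n 0 = (-1) ^ (n + 1) * 4 * int n \<and>
           U n 0 = (-1) ^ (n + 1) * 4 * (2 * int n - 1) \<and>
           (\<forall>j. T n j \<noteq> 0 \<longrightarrow> 0 \<le> j \<and> j \<le> int n) \<and>
           (\<forall>j. U n j \<noteq> 0 \<longrightarrow> 0 \<le> j \<and> j \<le> int n + 1)"
proof (intro allI impI)
  interpret TU_recurrence T U
    using assms by unfold_locales
  fix n :: nat
  assume "n \<ge> 1"
  have "T n j \<noteq> 0 \<longrightarrow> 0 \<le> j \<and> j \<le> int n" for j
    using neg[of j n] T_vanishes_above[of n j] by fastforce
  moreover have "U n j \<noteq> 0 \<longrightarrow> 0 \<le> j \<and> j \<le> int n + 1" for j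
    using neg[of j n] U_vanishes_above[of n j] by fastforce
  ultimately show "T n (int n) = -1 \<and> U n (int n + 1) = -1 \<and>
           T n 0 = (-1) ^ (n + 1) * 4 * int n \<and>
           U n 0 = (-1) ^ (n + 1) * 4 * (2 * int n - 1) \<and>
           (\<forall>j. T n j \<noteq> 0 \<longrightarrow> 0 \<le> j \<and> j \<le> int n) \<and>
           (\<forall>j. U n j \<noteq> 0 \<longrightarrow> 0 \<le> j \<and> j \<le> int n + 1)"
    using T_diagonal U_superdiagonal column_zero \<open>n \<ge> 1\<close> by blast
qed

end
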